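(* Let $\Bbbk$ be a field of characteristic $0$ and $X$ a set. Then $\mathrm{DiSJ}\langle X\rangle$ is the free dialgebra on $X$ in the class $\mathrm{HomDiSJ}$: it belongs to $\mathrm{HomDiSJ}$, and for every $J'\in\mathrm{HomDiSJ}$ every map $X\to J'$ extends to a homomorphism $\mathrm{DiSJ}\langle X\rangle\to J'$.
   Context: An associative dialgebra is a vector space with bilinear $\vdash,\dashv$ satisfying $(x\dashv y)\vdash z=(x\vdash y)\vdash z$, $x\dashv(y\vdash z)=x\dashv(y\dashv z)$, $(x\vdash y)\vdash z=x\vdash(y\vdash z)$, $(x\dashv y)\dashv z=x\dashv(y\dashv z)$, $(x\vdash y)\dashv z=x\vdash(y\dashv z)$; $\mathrm{DiAs}\langle X\rangle$ is the free associative dialgebra. $D^{(+)}$ is $D$ with $a\vdash_+b=\tfrac12(a\vdash b+b\dashv a)$, $a\dashv_+b=\tfrac12(a\dashv b+b\vdash a)$. $\mathrm{DiSJ}\langle X\rangle$ is the subdialgebra of $\mathrm{DiAs}\langle X\rangle^{(+)}$ generated by $X$. A special Jordan dialgebra is a subdialgebra of some $D^{(+)}$ with $D$ associative; $\mathrm{HomDiSJ}$ is the class of homomorphic images of special Jordan dialgebras. *)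

theory Defs
  imports Main "HOL.Vector_Spaces" "HOL-Library.Function_Algebras"
begin

text \<open>A vector space over the field 'k is a carrier V inside a type 'v carrying
  a module structure given by the scalar multiplication sc. The two products
  are dl (for x |- y) and dr (for x -| y).\<close>

definition subspc :: "('k::field \<Rightarrow> 'v::ab_group_add \<Rightarrow> 'v) \<Rightarrow> 'v set \<Rightarrow> bool" where
  "subspc sc V \<longleftrightarrow> 0 \<in> V \<and> (\<forall>x\<in>V. \<forall>y\<in>V. x + y \<in> V) \<and> (\<forall>a. \<forall>x\<in>V. sc a x \<in> V)"

definition dialg :: "('k::field \<Rightarrow> 'v::ab_group_add \<Rightarrow> 'v) \<Rightarrow> 'v set
    \<Rightarrow> ('v \<Rightarrow> 'v \<Rightarrow> 'v) \<Rightarrow> ('v \<Rightarrow> 'v \<Rightarrow> 'v) \<Rightarrow> bool" where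
  "dialg sc V dl dr \<longleftrightarrow> module sc \<and> subspc sc V \<and>
     (\<forall>x\<in>V. \<forall>y\<in>V. dl x y \<in> V \<and> dr x y \<in> V) \<and>
     (\<forall>x\<in>V. \<forall>y\<in>V. \<forall>z\<in>V.
        dl (x + y) z = dl x z + dl y z \<and> dl x (y + z) = dl x y + dl x z \<and>
        dr (x + y) z = dr x z + dr y z \<and> dr x (y + z) = dr x y + dr x z) \<and>
     (\<forall>a. \<forall>x\<in>V. \<forall>y\<in>V.
        dl (sc a x) y = sc a (dl x y) \<and> dl x (sc a y) = sc a (dl x y) \<and>
        dr (sc a x) y = sc a (dr x y) \<and> dr x (sc a y) = sc a (dr x y))"

definition assoc_dialg :: "('k::field \<Rightarrow> 'v::ab_group_add \<Rightarrow> 'v) \<Rightarrow> 'v set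
    \<Rightarrow> ('v \<Rightarrow> 'v \<Rightarrow> 'v) \<Rightarrow> ('v \<Rightarrow> 'v \<Rightarrow> 'v) \<Rightarrow> bool" where
  "assoc_dialg sc V dl dr \<longleftrightarrow> dialg sc V dl dr \<and>
     (\<forall>x\<in>V. \<forall>y\<in>V. \<forall>z\<in>V.
        dl (dr x y) z = dl (dl x y) z \<and>
        dr x (dl y z) = dr x (dr y z) \<and>
        dl (dl x y) z = dl x (dl y z) \<and>
        dr (dr x y) z = dr x (dr y z) \<and>
        dr (dl x y) z = dl x (dr y z))"

definition plus_dl :: "('k::field \<Rightarrow> 'v::ab_group_add \<Rightarrow> 'v)
    \<Rightarrow> ('v \<Rightarrow> 'v \<Rightarrow> 'v) \<Rightarrow> ('v \<Rightarrow> 'v \<Rightarrow> 'v) \<Rightarrow> 'v \<Rightarrow> 'v \<Rightarrow> 'v" where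
  "plus_dl sc dl dr a b = sc (inverse 2) (dl a b + dr b a)"

definition plus_dr :: "('k::field \<Rightarrow> 'v::ab_group_add \<Rightarrow> 'v)
    \<Rightarrow> ('v \<Rightarrow> 'v \<Rightarrow> 'v) \<Rightarrow> ('v \<Rightarrow> 'v \<Rightarrow> 'v) \<Rightarrow> 'v \<Rightarrow> 'v \<Rightarrow> 'v" where
  "plus_dr sc dl dr a b = sc (inverse 2) (dr a b + dl b a)"

definition subdialg :: "('k::field \<Rightarrow> 'v::ab_group_add \<Rightarrow> 'v) \<Rightarrow> 'v set
    \<Rightarrow> ('v \<Rightarrow> 'v \<Rightarrow> 'v) \<Rightarrow> ('v \<Rightarrow> 'v \<Rightarrow> 'v) \<Rightarrow> 'v set \<Rightarrow> bool" where
  "subdialg sc V dl dr S \<longleftrightarrow> S \<subseteq> V \<and> subspc sc S \<and>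
     (\<forall>x\<in>S. \<forall>y\<in>S. dl x y \<in> S \<and> dr x y \<in> S)"

definition gen_subdialg :: "('k::field \<Rightarrow> 'v::ab_group_add \<Rightarrow> 'v) \<Rightarrow> 'v set
    \<Rightarrow> ('v \<Rightarrow> 'v \<Rightarrow> 'v) \<Rightarrow> ('v \<Rightarrow> 'v \<Rightarrow> 'v) \<Rightarrow> 'v set \<Rightarrow> 'v set" where
  "gen_subdialg sc V dl dr A = \<Inter>{S. A \<subseteq> S \<and> subdialg sc V dl dr S}"

definition dialg_hom :: "('k::field \<Rightarrow> 'v::ab_group_add \<Rightarrow> 'v) \<Rightarrow> 'v set
    \<Rightarrow> ('v \<Rightarrow> 'v \<Rightarrow> 'v) \<Rightarrow> ('v \<Rightarrow> 'v \<Rightarrow> 'v)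
    \<Rightarrow> ('k \<Rightarrow> 'w::ab_group_add \<Rightarrow> 'w) \<Rightarrow> 'w set
    \<Rightarrow> ('w \<Rightarrow> 'w \<Rightarrow> 'w) \<Rightarrow> ('w \<Rightarrow> 'w \<Rightarrow> 'w) \<Rightarrow> ('v \<Rightarrow> 'w) \<Rightarrow> bool" where
  "dialg_hom sc1 V1 dl1 dr1 sc2 V2 dl2 dr2 f \<longleftrightarrow>
     f ` V1 \<subseteq> V2 \<and>
     (\<forall>x\<in>V1. \<forall>y\<in>V1. f (x + y) = f x + f y \<and>
        f (dl1 x y) = dl2 (f x) (f y) \<and> f (dr1 x y) = dr2 (f x) (f y)) \<and>
     (\<forall>a. \<forall>x\<in>V1. f (sc1 a x) = sc2 a (f x))"

text \<open>HomDiSJ: (sc,V,dl,dr) is a dialgebra which is the image of a surjective homomorphism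
  from a special Jordan dialgebra S, i.e. a subdialgebra S of D^(+) for an associative
  dialgebra D. The type of D is given by the itself-argument; membership in the class
  HomDiSJ means: this holds for SOME type 'd.\<close>

definition HomDiSJ_via :: "'d::ab_group_add itself \<Rightarrow> ('k::field \<Rightarrow> 'v::ab_group_add \<Rightarrow> 'v)
    \<Rightarrow> 'v set \<Rightarrow> ('v \<Rightarrow> 'v \<Rightarrow> 'v) \<Rightarrow> ('v \<Rightarrow> 'v \<Rightarrow> 'v) \<Rightarrow> bool" where
  "HomDiSJ_via _ sc V dl dr \<longleftrightarrow> dialg sc V dl dr \<and>
     (\<exists>(scD :: 'k \<Rightarrow> 'd \<Rightarrow> 'd) D dlD drD S f.
        assoc_dialg scD D dlD drD \<and>
        subdialg scD D (plus_dl scD dlD drD) (plus_dr scD dlD drD) S \<and>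
        dialg_hom scD S (plus_dl scD dlD drD) (plus_dr scD dlD drD) sc V dl dr f \<and>
        f ` S = V)"

text \<open>Basis: marked words (w,p) with w a nonempty word over X and p < length w the marked
  position. Elements: finitely supported k-valued functions on marked words.
  (u,i) |- (v,j) = (u@v, length u + j),  (u,i) -| (v,j) = (u@v, i).\<close>

type_synonym ('x,'k) dias = "'x list \<times> nat \<Rightarrow> 'k"

definition dias_scale :: "'k::field \<Rightarrow> ('x,'k) dias \<Rightarrow> ('x,'k) dias" where
  "dias_scale a f = (\<lambda>m. a * f m)"

definition dias_carrier :: "'x set \<Rightarrow> ('x,'k::field) dias set" where
  "dias_carrier X = {f. finite {m. f m \<noteq> 0} \<and>
     (\<forall>w p. f (w, p) \<noteq> 0 \<longrightarrow> w \<noteq> [] \<and> set w \<subseteq> X \<and> p < length w)}"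

definition dias_dl :: "('x,'k::field) dias \<Rightarrow> ('x,'k) dias \<Rightarrow> ('x,'k) dias" where
  "dias_dl f g = (\<lambda>(w, p). \<Sum>k\<in>{1..<length w}.
      if k \<le> p then (\<Sum>i<k. f (take k w, i)) * g (drop k w, p - k) else 0)"

definition dias_dr :: "('x,'k::field) dias \<Rightarrow> ('x,'k) dias \<Rightarrow> ('x,'k) dias" where
  "dias_dr f g = (\<lambda>(w, p). \<Sum>k\<in>{1..<length w}.
      if p < k then f (take k w, p) * (\<Sum>j<length w - k. g (drop k w, j)) else 0)"

definition dias_gen :: "'x \<Rightarrow> ('x,'k::field) dias" where
  "dias_gen x = (\<lambda>m. if m = ([x], 0) then 1 else 0)"

definition DiSJ :: "'x set \<Rightarrow> ('x,'k::field) dias set" where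
  "DiSJ X = gen_subdialg dias_scale (dias_carrier X)
      (plus_dl dias_scale dias_dl dias_dr) (plus_dr dias_scale dias_dl dias_dr)
      (dias_gen ` X)"

end

theory Submission
  imports Defs
begin

text \<open>DiSJ\<langle>X\<rangle> is a subdialgebra of DiAs\<langle>X\<rangle>^(+), hence special. For the universal
  property let J = f(S) with S \<subseteq> D^(+) special. Lift the images of the generators to S and
  extend the lift to a homomorphism \<Psi> : DiAs\<langle>X\<rangle> \<rightarrow> D of associative dialgebras, using
  that DiAs\<langle>X\<rangle> is free (\<Psi> multiplies the letters of a marked word with all products pointing
  towards the marked letter). Then \<Psi> is also a homomorphism DiAs\<langle>X\<rangle>^(+) \<rightarrow> D^(+), so
  \<Psi>\<inverse>(S) is a subdialgebra of DiAs\<langle>X\<rangle>^(+) containing X, hence containing DiSJ\<langle>X\<rangle>,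
  and f \<circ> \<Psi> is the required extension. Characteristic 0 is never used: the argument works
  over any field.\<close>

section \<open>Linear maps on carriers and dialgebra homomorphisms\<close>

definition linear_on :: "('k \<Rightarrow> 'a::ab_group_add \<Rightarrow> 'a) \<Rightarrow> 'a set
    \<Rightarrow> ('k \<Rightarrow> 'b::ab_group_add \<Rightarrow> 'b) \<Rightarrow> ('a \<Rightarrow> 'b) \<Rightarrow> bool" where
  "linear_on sc V sc' L \<longleftrightarrow>
     (\<forall>x\<in>V. \<forall>y\<in>V. L (x + y) = L x + L y) \<and> (\<forall>a. \<forall>x\<in>V. L (sc a x) = sc' a (L x))"

lemma linear_on_comp:
  assumes "linear_on sc1 V sc2 L" "linear_on sc2 W sc3 M" "L ` V \<subseteq> W"
  shows "linear_on sc1 V sc3 (\<lambda>x. M (L x))"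
  using assms by (auto simp: linear_on_def image_subset_iff)

lemma additive_on_sum:
  fixes L :: "'a::comm_monoid_add \<Rightarrow> 'b::ab_group_add"
  assumes add: "\<And>x y. x \<in> V \<Longrightarrow> y \<in> V \<Longrightarrow> L (x + y) = L x + L y"
    and closed: "0 \<in> V" "\<And>x y. x \<in> V \<Longrightarrow> y \<in> V \<Longrightarrow> x + y \<in> V"
    and F: "\<And>i. i \<in> A \<Longrightarrow> F i \<in> V"
  shows "L (\<Sum>i\<in>A. F i) = (\<Sum>i\<in>A. L (F i))"
proof -
  have "L 0 = 0" using add[OF closed(1) closed(1)] by simp
  with F have "L (\<Sum>i\<in>A. F i) = (\<Sum>i\<in>A. L (F i)) \<and> (\<Sum>i\<in>A. F i) \<in> V"
    by (induction A rule: infinite_finite_induct) (auto simp: closed add)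
  then show ?thesis ..
qed

lemma dialg_linear_on:
  assumes "dialg sc V dl dr" "y \<in> V"
  shows "linear_on sc V sc (\<lambda>x. dl x y)" "linear_on sc V sc (dl y)"
    "linear_on sc V sc (\<lambda>x. dr x y)" "linear_on sc V sc (dr y)"
  using assms by (auto simp: dialg_def linear_on_def)

lemma gen_subdialg_subdialg:
  assumes "subdialg sc V dl dr V" "A \<subseteq> V"
  shows "subdialg sc V dl dr (gen_subdialg sc V dl dr A)"
proof -
  let ?F = "{S. A \<subseteq> S \<and> subdialg sc V dl dr S}"
  have "V \<in> ?F" using assms by simp
  then have "\<Inter>?F \<subseteq> V" by blast
  moreover have "subspc sc (\<Inter>?F)"
    unfolding subspc_def by (auto simp: subdialg_def subspc_def)
  moreover have "\<forall>x\<in>\<Inter>?F. \<forall>y\<in>\<Inter>?F. dl x y \<in> \<Inter>?F \<and> dr x y \<in> \<Inter>?F"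
    by (auto simp: subdialg_def)
  ultimately show ?thesis
    unfolding gen_subdialg_def subdialg_def by blast
qed

lemma gen_subdialg_least:
  "subdialg sc V dl dr T \<Longrightarrow> A \<subseteq> T \<Longrightarrow> gen_subdialg sc V dl dr A \<subseteq> T"
  unfolding gen_subdialg_def by blast

lemma subdialg_self: "subdialg sc V dl dr S \<Longrightarrow> subdialg sc S dl dr S"
  by (simp add: subdialg_def)

lemma subdialg_plus_carrier:
  assumes "dialg sc V dl dr"
  shows "subdialg sc V (plus_dl sc dl dr) (plus_dr sc dl dr) V"
  using assms by (simp add: subdialg_def dialg_def subspc_def plus_dl_def plus_dr_def)

lemma dialg_plus_subdialg:
  assumes D: "dialg sc V dl dr" and S: "subdialg sc V (plus_dl sc dl dr) (plus_dr sc dl dr) S"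
  shows "dialg sc S (plus_dl sc dl dr) (plus_dr sc dl dr)"
proof -
  interpret module sc using D by (simp add: dialg_def)
  have "S \<subseteq> V" using S by (simp add: subdialg_def)
  with D S show ?thesis
    by (auto simp: dialg_def subdialg_def plus_dl_def plus_dr_def scale_right_distrib
        scale_scale mult.commute add_ac subset_iff)
qed

lemma special_in_HomDiSJ:
  assumes D: "assoc_dialg (scD :: 'k::field \<Rightarrow> 'd::ab_group_add \<Rightarrow> 'd) D dlD drD"
    and S: "subdialg scD D (plus_dl scD dlD drD) (plus_dr scD dlD drD) S"
  shows "HomDiSJ_via TYPE('d) scD S (plus_dl scD dlD drD) (plus_dr scD dlD drD)"
proof -
  have "dialg scD S (plus_dl scD dlD drD) (plus_dr scD dlD drD)"
    using D S by (intro dialg_plus_subdialg) (auto simp: assoc_dialg_def)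
  moreover have "dialg_hom scD S (plus_dl scD dlD drD) (plus_dr scD dlD drD)
      scD S (plus_dl scD dlD drD) (plus_dr scD dlD drD) id"
    by (simp add: dialg_hom_def)
  moreover have "id ` S = S" by simp
  ultimately show ?thesis
    unfolding HomDiSJ_via_def using D S by blast
qed

lemma dialg_hom_plus:
  assumes "dialg sc1 V1 dl1 dr1" "dialg_hom sc1 V1 dl1 dr1 sc2 V2 dl2 dr2 f"
  shows "dialg_hom sc1 V1 (plus_dl sc1 dl1 dr1) (plus_dr sc1 dl1 dr1)
           sc2 V2 (plus_dl sc2 dl2 dr2) (plus_dr sc2 dl2 dr2) f"
  using assms by (simp add: dialg_hom_def dialg_def subspc_def plus_dl_def plus_dr_def)

lemma dialg_hom_vimage_subdialg:
  assumes f: "dialg_hom sc1 V1 dl1 dr1 sc2 V2 dl2 dr2 f"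
    and V1: "subdialg sc1 V1 dl1 dr1 V1" and S: "subdialg sc2 V2 dl2 dr2 S"
  shows "subdialg sc1 V1 dl1 dr1 (V1 \<inter> f -` S)"
proof -
  have "0 \<in> V1" using V1 by (simp add: subdialg_def subspc_def)
  then have "f 0 = 0" using f add_cancel_right_right[of "f 0" "f 0"] by (auto simp: dialg_hom_def)
  then show ?thesis
    using assms by (auto simp: subdialg_def subspc_def dialg_hom_def)
qed

lemma dialg_hom_restrict:
  "dialg_hom sc1 V1 dl1 dr1 sc2 V2 dl2 dr2 f \<Longrightarrow> W \<subseteq> V1 \<Longrightarrow> f ` W \<subseteq> S \<Longrightarrow>
    dialg_hom sc1 W dl1 dr1 sc2 S dl2 dr2 f"
  unfolding dialg_hom_def by blast

lemma dialg_hom_comp: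
  assumes "dialg_hom sc1 V1 dl1 dr1 sc2 V2 dl2 dr2 f" "dialg_hom sc2 V2 dl2 dr2 sc3 V3 dl3 dr3 g"
    and "subdialg sc1 V1 dl1 dr1 V1"
  shows "dialg_hom sc1 V1 dl1 dr1 sc3 V3 dl3 dr3 (g \<circ> f)"
  using assms by (fastforce simp: dialg_hom_def subdialg_def subspc_def subset_iff)

section \<open>The free associative dialgebra\<close>

lemma dias_module: "module (dias_scale :: 'k::field \<Rightarrow> ('x,'k) dias \<Rightarrow> _)"
  by unfold_locales (auto simp: dias_scale_def algebra_simps)

lemma dias_dl_add_left: "dias_dl (f + f') g = dias_dl f g + dias_dl f' g"
  by (rule ext, clarify, simp only: dias_dl_def split_conv plus_fun_apply flip: sum.distrib,
      rule sum.cong) (simp_all add: sum.distrib ring_distribs)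

lemma dias_dl_add_right: "dias_dl f (g + g') = dias_dl f g + dias_dl f g'"
  by (rule ext, clarify, simp only: dias_dl_def split_conv plus_fun_apply flip: sum.distrib,
      rule sum.cong) (simp_all add: ring_distribs)

lemma dias_dr_add_left: "dias_dr (f + f') g = dias_dr f g + dias_dr f' g"
  by (rule ext, clarify, simp only: dias_dr_def split_conv plus_fun_apply flip: sum.distrib,
      rule sum.cong) (simp_all add: ring_distribs)

lemma dias_dr_add_right: "dias_dr f (g + g') = dias_dr f g + dias_dr f g'"
  by (rule ext, clarify, simp only: dias_dr_def split_conv plus_fun_apply flip: sum.distrib,
      rule sum.cong) (simp_all add: sum.distrib ring_distribs)

lemma dias_dl_scale_left: "dias_dl (dias_scale a f) g = dias_scale a (dias_dl f g)"
  by (auto simp: dias_dl_def dias_scale_def fun_eq_iff sum_distrib_left algebra_simps intro!: sum.cong)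

lemma dias_dl_scale_right: "dias_dl f (dias_scale a g) = dias_scale a (dias_dl f g)"
  by (auto simp: dias_dl_def dias_scale_def fun_eq_iff sum_distrib_left algebra_simps intro!: sum.cong)

lemma dias_dr_scale_left: "dias_dr (dias_scale a f) g = dias_scale a (dias_dr f g)"
  by (auto simp: dias_dr_def dias_scale_def fun_eq_iff sum_distrib_left algebra_simps intro!: sum.cong)

lemma dias_dr_scale_right: "dias_dr f (dias_scale a g) = dias_scale a (dias_dr f g)"
  by (auto simp: dias_dr_def dias_scale_def fun_eq_iff sum_distrib_left algebra_simps intro!: sum.cong)

lemmas dias_bilinear = dias_dl_add_left dias_dl_add_right dias_dr_add_left dias_dr_add_right
  dias_dl_scale_left dias_dl_scale_right dias_dr_scale_left dias_dr_scale_right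

definition dias_supp :: "('x,'k::zero) dias \<Rightarrow> ('x list \<times> nat) set" where
  "dias_supp f = {m. f m \<noteq> 0}"

definition dias_basis :: "'x list \<times> nat \<Rightarrow> ('x,'k::field) dias" where
  "dias_basis m = (\<lambda>m'. if m' = m then 1 else 0)"

definition marked_word :: "'x set \<Rightarrow> 'x list \<times> nat \<Rightarrow> bool" where
  "marked_word X m \<longleftrightarrow> fst m \<noteq> [] \<and> set (fst m) \<subseteq> X \<and> snd m < length (fst m)"

lemma take_drop_eq_iff:
  "k < length w \<Longrightarrow> (take k w = u \<and> drop k w = v) \<longleftrightarrow> (w = u @ v \<and> k = length u)"
  by (auto simp: append_eq_conv_conj)

lemma dias_dl_basis:
  assumes "u \<noteq> []" "v \<noteq> []" "i < length u"
  shows "dias_dl (dias_basis (u, i)) (dias_basis (v, j))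
    = (dias_basis (u @ v, length u + j) :: ('x,'k::field) dias)"
proof (rule ext, clarify)
  fix w p
  have "dias_dl (dias_basis (u, i)) (dias_basis (v, j)) (w, p) = (\<Sum>k\<in>{1..<length w}.
      if k = length u then (if w = u @ v \<and> p = length u + j then (1::'k) else 0) else 0)"
    unfolding dias_dl_def split_conv
  proof (intro sum.cong refl)
    fix k assume k: "k \<in> {1..<length w}"
    have left: "(\<Sum>i'<k. dias_basis (u, i) (take k w, i')) = (if take k w = u \<and> i < k then (1::'k) else 0)"
      unfolding dias_basis_def by (cases "take k w = u") simp_all
    show "(if k \<le> p then (\<Sum>i'<k. dias_basis (u, i) (take k w, i')) * dias_basis (v, j) (drop k w, p - k) else 0)
        = (if k = length u then if w = u @ v \<and> p = length u + j then (1::'k) else 0 else 0)"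
    proof (cases "take k w = u \<and> drop k w = v")
      case True
      then have "w = u @ v" "k = length u" using take_drop_eq_iff[of k w u v] k by auto
      then show ?thesis unfolding left using assms by (auto simp: dias_basis_def)
    next
      case False
      then have "\<not> (k = length u \<and> w = u @ v)" using take_drop_eq_iff[of k w u v] k by auto
      then show ?thesis unfolding left using False by (auto simp: dias_basis_def)
    qed
  qed
  also have "\<dots> = dias_basis (u @ v, length u + j) (w, p)"
    using assms by (auto simp: dias_basis_def)
  finally show "dias_dl (dias_basis (u, i)) (dias_basis (v, j)) (w, p)
      = (dias_basis (u @ v, length u + j) :: ('x,'k) dias) (w, p)" .
qed

lemma dias_dr_basis:
  assumes "u \<noteq> []" "v \<noteq> []" "i < length u" "j < length v"
  shows "dias_dr (dias_basis (u, i)) (dias_basis (v, j)) = (dias_basis (u @ v, i) :: ('x,'k::field) dias)"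
proof (rule ext, clarify)
  fix w p
  have "dias_dr (dias_basis (u, i)) (dias_basis (v, j)) (w, p) = (\<Sum>k\<in>{1..<length w}.
      if k = length u then (if w = u @ v \<and> p = i then (1::'k) else 0) else 0)"
    unfolding dias_dr_def split_conv
  proof (intro sum.cong refl)
    fix k assume k: "k \<in> {1..<length w}"
    have right: "(\<Sum>j'<length w - k. dias_basis (v, j) (drop k w, j'))
        = (if drop k w = v \<and> j < length w - k then (1::'k) else 0)"
      unfolding dias_basis_def by (cases "drop k w = v") simp_all
    show "(if p < k then dias_basis (u, i) (take k w, p) * (\<Sum>j'<length w - k. dias_basis (v, j) (drop k w, j')) else 0)
        = (if k = length u then if w = u @ v \<and> p = i then (1::'k) else 0 else 0)"
    proof (cases "take k w = u \<and> drop k w = v")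
      case True
      then have "w = u @ v" "k = length u" using take_drop_eq_iff[of k w u v] k by auto
      then show ?thesis unfolding right using assms by (auto simp: dias_basis_def)
    next
      case False
      then have "\<not> (k = length u \<and> w = u @ v)" using take_drop_eq_iff[of k w u v] k by auto
      then show ?thesis unfolding right using False by (auto simp: dias_basis_def)
    qed
  qed
  also have "\<dots> = dias_basis (u @ v, i) (w, p)"
    using assms by (auto simp: dias_basis_def)
  finally show "dias_dr (dias_basis (u, i)) (dias_basis (v, j)) (w, p)
      = (dias_basis (u @ v, i) :: ('x,'k) dias) (w, p)" .
qed

lemma dias_gen_eq_basis: "dias_gen x = dias_basis ([x], 0)"
  by (simp add: dias_gen_def dias_basis_def fun_eq_iff)

lemma dias_supp_basis: "dias_supp (dias_basis m :: ('x,'k::field) dias) = {m}"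
  by (auto simp: dias_supp_def dias_basis_def)

lemma sum_fun_apply: "(\<Sum>i\<in>A. F i) x = (\<Sum>i\<in>A. F i x)"
  by (induction A rule: infinite_finite_induct) auto

lemma dias_basis_expansion:
  "finite (dias_supp f) \<Longrightarrow> f = (\<Sum>m\<in>dias_supp f. dias_scale (f m) (dias_basis m))"
  by (rule ext) (simp add: sum_fun_apply dias_scale_def dias_basis_def dias_supp_def if_distrib
      sum.delta' cong: if_cong)

lemma dias_carrier_iff:
  "f \<in> dias_carrier X \<longleftrightarrow> finite (dias_supp f) \<and> (\<forall>m\<in>dias_supp f. marked_word X m)"
  by (auto simp: dias_carrier_def dias_supp_def marked_word_def)

lemma dias_carrier_zero: "0 \<in> dias_carrier X"
  by (simp add: dias_carrier_def)

lemma dias_carrier_add: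
  assumes "f \<in> dias_carrier X" "g \<in> dias_carrier X"
  shows "f + g \<in> dias_carrier X"
proof -
  have "dias_supp (f + g) \<subseteq> dias_supp f \<union> dias_supp g"
    by (auto simp: dias_supp_def)
  then show ?thesis
    using assms by (auto simp: dias_carrier_iff intro: finite_subset)
qed

lemma dias_carrier_scale:
  assumes "f \<in> dias_carrier X"
  shows "dias_scale a f \<in> dias_carrier X"
proof -
  have "dias_supp (dias_scale a f) \<subseteq> dias_supp f"
    by (auto simp: dias_supp_def dias_scale_def)
  then show ?thesis
    using assms by (auto simp: dias_carrier_iff intro: finite_subset)
qed

lemma dias_carrier_sum: "(\<And>i. i \<in> A \<Longrightarrow> F i \<in> dias_carrier X) \<Longrightarrow> (\<Sum>i\<in>A. F i) \<in> dias_carrier X"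
  by (induction A rule: infinite_finite_induct) (auto simp: dias_carrier_zero dias_carrier_add)

lemma dias_basis_in_carrier: "marked_word X m \<Longrightarrow> dias_basis m \<in> dias_carrier X"
  by (simp add: dias_carrier_iff dias_supp_basis)

lemma dias_linear_expansion:
  fixes L :: "('x,'k::field) dias \<Rightarrow> 'b::ab_group_add" and sc :: "'k \<Rightarrow> 'b \<Rightarrow> 'b"
  assumes L: "linear_on dias_scale (dias_carrier X) sc L" and h: "h \<in> dias_carrier X"
  shows "L h = (\<Sum>m\<in>dias_supp h. sc (h m) (L (dias_basis m)))"
proof -
  have fin: "finite (dias_supp h)" and marked: "\<And>m. m \<in> dias_supp h \<Longrightarrow> marked_word X m"
    using h by (auto simp: dias_carrier_iff)
  have "L h = L (\<Sum>m\<in>dias_supp h. dias_scale (h m) (dias_basis m))"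
    using dias_basis_expansion[OF fin] by simp
  also have "\<dots> = (\<Sum>m\<in>dias_supp h. L (dias_scale (h m) (dias_basis m)))"
    using L marked by (intro additive_on_sum[of "dias_carrier X" L])
      (auto simp: linear_on_def dias_carrier_zero dias_carrier_add dias_carrier_scale dias_basis_in_carrier)
  also have "\<dots> = (\<Sum>m\<in>dias_supp h. sc (h m) (L (dias_basis m)))"
    using L marked by (simp add: linear_on_def dias_basis_in_carrier)
  finally show ?thesis .
qed

lemma dias_linear_ext:
  fixes L R :: "('x,'k::field) dias \<Rightarrow> 'b::ab_group_add" and sc :: "'k \<Rightarrow> 'b \<Rightarrow> 'b"
  assumes "linear_on dias_scale (dias_carrier X) sc L" "linear_on dias_scale (dias_carrier X) sc R"
    and "\<And>m. marked_word X m \<Longrightarrow> L (dias_basis m) = R (dias_basis m)"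
    and h: "h \<in> dias_carrier X"
  shows "L h = R h"
proof -
  have "L h = (\<Sum>m\<in>dias_supp h. sc (h m) (L (dias_basis m)))"
    by (rule dias_linear_expansion[OF assms(1) h])
  also have "\<dots> = (\<Sum>m\<in>dias_supp h. sc (h m) (R (dias_basis m)))"
    using assms(3) h by (auto simp: dias_carrier_iff intro!: sum.cong)
  also have "\<dots> = R h"
    by (rule dias_linear_expansion[OF assms(2) h, symmetric])
  finally show ?thesis .
qed

lemma dias_bilinear_closed:
  fixes B :: "('x,'k::field) dias \<Rightarrow> ('x,'k) dias \<Rightarrow> ('x,'k) dias"
  assumes lin_left: "\<And>g. linear_on dias_scale (dias_carrier X) dias_scale (\<lambda>f. B f g)"
    and lin_right: "\<And>f. linear_on dias_scale (dias_carrier X) dias_scale (B f)"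
    and basis: "\<And>m n. marked_word X m \<Longrightarrow> marked_word X n \<Longrightarrow>
      B (dias_basis m) (dias_basis n) \<in> dias_carrier X"
    and f: "f \<in> dias_carrier X" and g: "g \<in> dias_carrier X"
  shows "B f g \<in> dias_carrier X"
proof -
  have marked: "\<And>m. m \<in> dias_supp h \<Longrightarrow> marked_word X m" if "h \<in> dias_carrier X" for h
    using that by (simp add: dias_carrier_iff)
  have "B (dias_basis m) g \<in> dias_carrier X" if "marked_word X m" for m
    unfolding dias_linear_expansion[OF lin_right[of "dias_basis m"] g]
    by (intro dias_carrier_sum dias_carrier_scale basis that marked[OF g])
  then show ?thesis
    unfolding dias_linear_expansion[OF lin_left f]
    by (intro dias_carrier_sum dias_carrier_scale) (use marked[OF f] in blast)
qed

lemma dias_basis_products_in_carrier: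
  assumes "marked_word X m" "marked_word X n"
  shows "dias_dl (dias_basis m) (dias_basis n) \<in> dias_carrier X"
    "dias_dr (dias_basis m) (dias_basis n) \<in> dias_carrier X"
  using assms by (cases m; cases n;
      auto simp: marked_word_def dias_dl_basis dias_dr_basis intro!: dias_basis_in_carrier)+

lemma dias_products_linear_on:
  "linear_on dias_scale V dias_scale (\<lambda>f. dias_dl f g)" "linear_on dias_scale V dias_scale (dias_dl f)"
  "linear_on dias_scale V dias_scale (\<lambda>f. dias_dr f g)" "linear_on dias_scale V dias_scale (dias_dr f)"
  by (simp_all add: linear_on_def dias_bilinear)

lemma dias_carrier_dl: "f \<in> dias_carrier X \<Longrightarrow> g \<in> dias_carrier X \<Longrightarrow> dias_dl f g \<in> dias_carrier X"
  by (rule dias_bilinear_closed[OF dias_products_linear_on(1,2) dias_basis_products_in_carrier(1)])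

lemma dias_carrier_dr: "f \<in> dias_carrier X \<Longrightarrow> g \<in> dias_carrier X \<Longrightarrow> dias_dr f g \<in> dias_carrier X"
  by (rule dias_bilinear_closed[OF dias_products_linear_on(3,4) dias_basis_products_in_carrier(2)])

lemma dialg_dias_carrier: "dialg dias_scale (dias_carrier X) dias_dl dias_dr"
  by (simp add: dialg_def dias_module subspc_def dias_carrier_zero dias_carrier_add
      dias_carrier_scale dias_carrier_dl dias_carrier_dr dias_bilinear)

definition dias_trilinear :: "'x set
    \<Rightarrow> (('x,'k::field) dias \<Rightarrow> ('x,'k) dias \<Rightarrow> ('x,'k) dias \<Rightarrow> ('x,'k) dias) \<Rightarrow> bool" where
  "dias_trilinear X T \<longleftrightarrow>
     (\<forall>y z. linear_on dias_scale (dias_carrier X) dias_scale (\<lambda>x. T x y z)) \<and>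
     (\<forall>x z. linear_on dias_scale (dias_carrier X) dias_scale (\<lambda>y. T x y z)) \<and>
     (\<forall>x y. linear_on dias_scale (dias_carrier X) dias_scale (T x y))"

lemma dias_trilinear_ext:
  assumes T: "dias_trilinear X T1" "dias_trilinear X T2"
    and basis: "\<And>m n q. marked_word X m \<Longrightarrow> marked_word X n \<Longrightarrow> marked_word X q \<Longrightarrow>
      T1 (dias_basis m) (dias_basis n) (dias_basis q) = T2 (dias_basis m) (dias_basis n) (dias_basis q)"
    and xyz: "x \<in> dias_carrier X" "y \<in> dias_carrier X" "z \<in> dias_carrier X"
  shows "T1 x y z = T2 x y z"
proof -
  have lin: "linear_on dias_scale (dias_carrier X) dias_scale (\<lambda>x. T x y z)"
    "linear_on dias_scale (dias_carrier X) dias_scale (\<lambda>y. T x y z)"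
    "linear_on dias_scale (dias_carrier X) dias_scale (T x y)"
    if "dias_trilinear X T" for T x y z
    using that unfolding dias_trilinear_def by blast+
  have basis2: "T1 (dias_basis m) (dias_basis n) z = T2 (dias_basis m) (dias_basis n) z"
    if "marked_word X m" "marked_word X n" for m n
    by (rule dias_linear_ext[OF lin(3)[OF T(1)] lin(3)[OF T(2)] basis[OF that] xyz(3)])
  have basis1: "T1 (dias_basis m) y z = T2 (dias_basis m) y z" if "marked_word X m" for m
    by (rule dias_linear_ext[OF lin(2)[OF T(1)] lin(2)[OF T(2)] basis2[OF that] xyz(2)])
  show ?thesis
    by (rule dias_linear_ext[OF lin(1)[OF T(1)] lin(1)[OF T(2)] basis1 xyz(1)])
qed

lemma assoc_dialg_dias_carrier:
  "assoc_dialg dias_scale (dias_carrier X :: ('x,'k::field) dias set) dias_dl dias_dr"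
  unfolding assoc_dialg_def
proof (intro conjI ballI dialg_dias_carrier)
  fix x y z :: "('x,'k) dias"
  assume "x \<in> dias_carrier X" "y \<in> dias_carrier X" "z \<in> dias_carrier X"
  note ext = dias_trilinear_ext[OF _ _ _ this]
  note simps = dias_trilinear_def linear_on_def dias_bilinear marked_word_def dias_dl_basis dias_dr_basis
  show "dias_dl (dias_dr x y) z = dias_dl (dias_dl x y) z"
    by (rule ext[of "\<lambda>x y z. dias_dl (dias_dr x y) z"]) (auto simp: simps)
  show "dias_dr x (dias_dl y z) = dias_dr x (dias_dr y z)"
    by (rule ext[of "\<lambda>x y z. dias_dr x (dias_dl y z)"]) (auto simp: simps)
  show "dias_dl (dias_dl x y) z = dias_dl x (dias_dl y z)"
    by (rule ext[of "\<lambda>x y z. dias_dl (dias_dl x y) z"]) (auto simp: simps add.assoc)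
  show "dias_dr (dias_dr x y) z = dias_dr x (dias_dr y z)"
    by (rule ext[of "\<lambda>x y z. dias_dr (dias_dr x y) z"]) (auto simp: simps)
  show "dias_dr (dias_dl x y) z = dias_dl x (dias_dr y z)"
    by (rule ext[of "\<lambda>x y z. dias_dr (dias_dl x y) z"]) (auto simp: simps)
qed

section \<open>Evaluation of marked words in an associative dialgebra\<close>

text \<open>For w = a1 ... an, the value at the marked position p is
  a1 |- ... |- ap |- (a(p+1) -| ... -| an), bracketed to the right: every product points towards
  the marked letter. This is the image of the basis element (w, p) under the homomorphism
  from the free associative dialgebra extending s.\<close>

fun word_eval :: "('x \<Rightarrow> 'd) \<Rightarrow> ('d \<Rightarrow> 'd \<Rightarrow> 'd) \<Rightarrow> ('d \<Rightarrow> 'd \<Rightarrow> 'd) \<Rightarrow> 'x list \<times> nat \<Rightarrow> 'd::zero" where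
  "word_eval s dl dr ([], p) = 0"
| "word_eval s dl dr ([a], p) = s a"
| "word_eval s dl dr (a # b # w, 0) = dr (s a) (word_eval s dl dr (b # w, 0))"
| "word_eval s dl dr (a # b # w, Suc p) = dl (s a) (word_eval s dl dr (b # w, p))"

locale dialg_eval =
  fixes scD :: "'k::field \<Rightarrow> 'd::ab_group_add \<Rightarrow> 'd" and D :: "'d set"
    and dlD drD :: "'d \<Rightarrow> 'd \<Rightarrow> 'd" and s :: "'x \<Rightarrow> 'd"
  assumes assoc: "assoc_dialg scD D dlD drD" and s_in: "\<And>x. s x \<in> D"
begin

abbreviation E :: "'x list \<times> nat \<Rightarrow> 'd" where
  "E \<equiv> word_eval s dlD drD"

lemma dialg: "dialg scD D dlD drD"
  using assoc by (simp add: assoc_dialg_def)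

lemma scD_module: "module scD"
  using dialg by (simp add: dialg_def)

lemma zero_in: "0 \<in> D"
  and add_in: "x \<in> D \<Longrightarrow> y \<in> D \<Longrightarrow> x + y \<in> D"
  and scale_in: "x \<in> D \<Longrightarrow> scD a x \<in> D"
  and dl_in: "x \<in> D \<Longrightarrow> y \<in> D \<Longrightarrow> dlD x y \<in> D"
  and dr_in: "x \<in> D \<Longrightarrow> y \<in> D \<Longrightarrow> drD x y \<in> D"
  using dialg by (simp_all add: dialg_def subspc_def)

lemma assoc_laws:
  assumes "x \<in> D" "y \<in> D" "z \<in> D"
  shows "dlD (drD x y) z = dlD (dlD x y) z" "drD x (dlD y z) = drD x (drD y z)"
    "dlD (dlD x y) z = dlD x (dlD y z)" "drD (drD x y) z = drD x (drD y z)"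
    "drD (dlD x y) z = dlD x (drD y z)"
  using assoc assms by (simp_all add: assoc_dialg_def)

lemma word_eval_in: "E m \<in> D"
  by (rule word_eval.induct[of "\<lambda>_ _ _ m. E m \<in> D"]) (auto simp: zero_in s_in dl_in dr_in)

lemma dr_word_eval_unmark: "x \<in> D \<Longrightarrow> drD x (E (v, j)) = drD x (E (v, 0))"
proof (induction v arbitrary: x j)
  case Nil
  then show ?case by simp
next
  case (Cons b v)
  show ?case
  proof (cases "v = [] \<or> j = 0")
    case True
    then show ?thesis by (cases v) auto
  next
    case False
    then obtain c w j' where v: "v = c # w" and j: "j = Suc j'"
      by (cases v; cases j) auto
    have "drD x (E (b # v, j)) = drD x (dlD (s b) (E (v, j')))"
      using v j by simp
    also have "\<dots> = drD (drD x (s b)) (E (v, j'))"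
      using assoc_laws[OF Cons.prems s_in word_eval_in] by simp
    also have "\<dots> = drD (drD x (s b)) (E (v, 0))"
      by (rule Cons.IH) (simp add: dr_in Cons.prems s_in)
    also have "\<dots> = drD x (E (b # v, 0))"
      using assoc_laws[OF Cons.prems s_in word_eval_in] v by simp
    finally show ?thesis .
  qed
qed

lemma dl_word_eval_unmark: "x \<in> D \<Longrightarrow> dlD (E (u, i)) x = dlD (E (u, 0)) x"
proof (induction u arbitrary: i)
  case Nil
  then show ?case by simp
next
  case (Cons a u)
  show ?case
  proof (cases "u = [] \<or> i = 0")
    case True
    then show ?thesis by (cases u) auto
  next
    case False
    then obtain b w i' where u: "u = b # w" and i: "i = Suc i'"
      by (cases u; cases i) auto
    have "dlD (E (a # u, i)) x = dlD (s a) (dlD (E (u, i')) x)"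
      using u i assoc_laws[OF s_in word_eval_in Cons.prems] by simp
    also have "\<dots> = dlD (s a) (dlD (E (u, 0)) x)"
      using Cons.IH Cons.prems by metis
    also have "\<dots> = dlD (E (a # u, 0)) x"
      using u assoc_laws[OF s_in word_eval_in Cons.prems] by simp
    finally show ?thesis .
  qed
qed

lemma word_eval_append_dr:
  "u \<noteq> [] \<Longrightarrow> v \<noteq> [] \<Longrightarrow> i < length u \<Longrightarrow> E (u @ v, i) = drD (E (u, i)) (E (v, j))"
proof (induction u arbitrary: i)
  case Nil
  then show ?case by simp
next
  case (Cons a u)
  obtain c v' where v: "v = c # v'" using Cons.prems by (cases v) auto
  show ?case
  proof (cases u)
    case Nil
    then show ?thesis
      using Cons.prems v dr_word_eval_unmark[OF s_in, of a v j] by simp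
  next
    case (Cons b w)
    note assoc' = assoc_laws[OF s_in word_eval_in word_eval_in]
    show ?thesis
    proof (cases i)
      case 0
      then show ?thesis
        using Cons Cons.IH[of 0] Cons.prems assoc' by simp
    next
      case (Suc i')
      then show ?thesis
        using Cons Cons.IH[of i'] Cons.prems assoc' by simp
    qed
  qed
qed

lemma word_eval_append_dl:
  "u \<noteq> [] \<Longrightarrow> v \<noteq> [] \<Longrightarrow> E (u @ v, length u + j) = dlD (E (u, i)) (E (v, j))"
proof (induction u arbitrary: i)
  case Nil
  then show ?case by simp
next
  case (Cons a u)
  obtain c v' where v: "v = c # v'" using Cons.prems by (cases v) auto
  show ?case
  proof (cases u)
    case Nil
    then show ?thesis using v by simp
  next
    case (Cons b w)
    have "E ((a # u) @ v, length (a # u) + j) = dlD (s a) (E (u @ v, length u + j))"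
      using Cons by simp
    also have "\<dots> = dlD (s a) (dlD (E (u, 0)) (E (v, j)))"
      using Cons.IH[of 0] Cons Cons.prems by simp
    also have "\<dots> = dlD (E (a # u, 1)) (E (v, j))"
      using Cons assoc_laws[OF s_in word_eval_in word_eval_in] by simp
    also have "\<dots> = dlD (E (a # u, i)) (E (v, j))"
      using dl_word_eval_unmark[OF word_eval_in] by metis
    finally show ?thesis .
  qed
qed

definition dias_eval :: "('x,'k) dias \<Rightarrow> 'd" where
  "dias_eval g = (\<Sum>m\<in>dias_supp g. scD (g m) (E m))"

lemma sum_in: "(\<And>i. i \<in> A \<Longrightarrow> F i \<in> D) \<Longrightarrow> (\<Sum>i\<in>A. F i) \<in> D"
  by (induction A rule: infinite_finite_induct) (auto simp: zero_in add_in)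

lemma dias_eval_in: "dias_eval g \<in> D"
  unfolding dias_eval_def by (intro sum_in scale_in word_eval_in)

lemma dias_eval_supset:
  "finite A \<Longrightarrow> dias_supp g \<subseteq> A \<Longrightarrow> dias_eval g = (\<Sum>m\<in>A. scD (g m) (E m))"
  unfolding dias_eval_def
  by (rule sum.mono_neutral_left) (auto simp: dias_supp_def module.scale_zero_left[OF scD_module])

lemma dias_eval_basis: "dias_eval (dias_basis m) = E m"
  unfolding dias_eval_def dias_supp_basis by (simp add: dias_basis_def module.scale_one[OF scD_module])

lemma dias_eval_linear_on: "linear_on dias_scale (dias_carrier X) scD dias_eval"
  unfolding linear_on_def
proof (intro conjI ballI allI)
  fix f g :: "('x,'k) dias"
  assume "f \<in> dias_carrier X" "g \<in> dias_carrier X"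
  then have fin: "finite (dias_supp f \<union> dias_supp g)"
    by (simp add: dias_carrier_iff)
  have supp: "dias_supp (f + g) \<subseteq> dias_supp f \<union> dias_supp g"
    by (auto simp: dias_supp_def)
  have "dias_eval (f + g)
      = (\<Sum>m\<in>dias_supp f \<union> dias_supp g. scD (f m + g m) (E m))"
    using dias_eval_supset[OF fin supp] by simp
  also have "\<dots> = (\<Sum>m\<in>dias_supp f \<union> dias_supp g. scD (f m) (E m))
      + (\<Sum>m\<in>dias_supp f \<union> dias_supp g. scD (g m) (E m))"
    by (simp add: module.scale_left_distrib[OF scD_module] sum.distrib)
  also have "\<dots> = dias_eval f + dias_eval g"
    using dias_eval_supset[OF fin, of f] dias_eval_supset[OF fin, of g] by simp
  finally show "dias_eval (f + g) = dias_eval f + dias_eval g" .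
next
  fix a and f :: "('x,'k) dias"
  assume "f \<in> dias_carrier X"
  then have fin: "finite (dias_supp f)"
    by (simp add: dias_carrier_iff)
  have "dias_supp (dias_scale a f) \<subseteq> dias_supp f"
    by (auto simp: dias_supp_def dias_scale_def)
  then have "dias_eval (dias_scale a f) = (\<Sum>m\<in>dias_supp f. scD (a * f m) (E m))"
    using dias_eval_supset[OF fin] by (simp add: dias_scale_def)
  also have "\<dots> = scD a (dias_eval f)"
    unfolding dias_eval_def
    by (simp add: module.scale_sum_right[OF scD_module] module.scale_scale[OF scD_module])
  finally show "dias_eval (dias_scale a f) = scD a (dias_eval f)" .
qed

lemma dias_eval_bilinear:
  fixes B :: "('x,'k) dias \<Rightarrow> ('x,'k) dias \<Rightarrow> ('x,'k) dias" and BD :: "'d \<Rightarrow> 'd \<Rightarrow> 'd"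
  assumes B_left: "\<And>g. linear_on dias_scale (dias_carrier X) dias_scale (\<lambda>f. B f g)"
    and B_right: "\<And>f. linear_on dias_scale (dias_carrier X) dias_scale (B f)"
    and B_closed: "\<And>f g. f \<in> dias_carrier X \<Longrightarrow> g \<in> dias_carrier X \<Longrightarrow> B f g \<in> dias_carrier X"
    and BD_left: "\<And>y. y \<in> D \<Longrightarrow> linear_on scD D scD (\<lambda>x. BD x y)"
    and BD_right: "\<And>x. x \<in> D \<Longrightarrow> linear_on scD D scD (BD x)"
    and basis: "\<And>m n. marked_word X m \<Longrightarrow> marked_word X n \<Longrightarrow>
      dias_eval (B (dias_basis m) (dias_basis n)) = BD (dias_eval (dias_basis m)) (dias_eval (dias_basis n))"
    and f: "f \<in> dias_carrier X" and g: "g \<in> dias_carrier X"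
  shows "dias_eval (B f g) = BD (dias_eval f) (dias_eval g)"
proof -
  have eval: "linear_on dias_scale (dias_carrier X) scD dias_eval" "dias_eval ` dias_carrier X \<subseteq> D"
    by (auto simp: dias_eval_linear_on dias_eval_in)
  have closed_left: "(\<lambda>f. B f g) ` dias_carrier X \<subseteq> dias_carrier X"
    and closed_right: "B f ` dias_carrier X \<subseteq> dias_carrier X"
    if "f \<in> dias_carrier X" "g \<in> dias_carrier X" for f g
    using that B_closed by auto
  have basis_left: "dias_eval (B (dias_basis m) g) = BD (dias_eval (dias_basis m)) (dias_eval g)"
    if m: "marked_word X m" for m
  proof (rule dias_linear_ext[OF _ _ _ g])
    show "linear_on dias_scale (dias_carrier X) scD (\<lambda>g. dias_eval (B (dias_basis m) g))"
      by (rule linear_on_comp[OF B_right eval(1) closed_right[OF dias_basis_in_carrier[OF m] g]])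
    show "linear_on dias_scale (dias_carrier X) scD (\<lambda>g. BD (dias_eval (dias_basis m)) (dias_eval g))"
      by (rule linear_on_comp[OF eval(1) BD_right eval(2)]) (rule dias_eval_in)
  qed (rule basis[OF m])
  show ?thesis
  proof (rule dias_linear_ext[OF _ _ _ f])
    show "linear_on dias_scale (dias_carrier X) scD (\<lambda>f. dias_eval (B f g))"
      by (rule linear_on_comp[OF B_left eval(1) closed_left[OF f g]])
    show "linear_on dias_scale (dias_carrier X) scD (\<lambda>f. BD (dias_eval f) (dias_eval g))"
      by (rule linear_on_comp[OF eval(1) BD_left eval(2)]) (rule dias_eval_in)
  qed (rule basis_left)
qed

lemma dias_eval_hom: "dialg_hom dias_scale (dias_carrier X) dias_dl dias_dr scD D dlD drD dias_eval"
proof -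
  have dl_basis: "dias_eval (dias_dl (dias_basis m) (dias_basis n))
      = dlD (dias_eval (dias_basis m)) (dias_eval (dias_basis n))"
    and dr_basis: "dias_eval (dias_dr (dias_basis m) (dias_basis n))
      = drD (dias_eval (dias_basis m)) (dias_eval (dias_basis n))"
    if "marked_word X m" "marked_word X n" for m n
    using that by (cases m; cases n; simp add: marked_word_def dias_dl_basis dias_dr_basis
        dias_eval_basis word_eval_append_dl word_eval_append_dr)+
  have "dias_eval (dias_dl f g) = dlD (dias_eval f) (dias_eval g)"
    "dias_eval (dias_dr f g) = drD (dias_eval f) (dias_eval g)"
    if "f \<in> dias_carrier X" "g \<in> dias_carrier X" for f g
    using dialg_linear_on[OF dialg] that
    by (auto intro!: dias_eval_bilinear[OF dias_products_linear_on(1,2) dias_carrier_dl _ _ dl_basis]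
        dias_eval_bilinear[OF dias_products_linear_on(3,4) dias_carrier_dr _ _ dr_basis])
  with dias_eval_linear_on[of X] show ?thesis
    by (auto simp: dialg_hom_def linear_on_def dias_eval_in)
qed

end

theorem dias_free:
  assumes D: "assoc_dialg (scD :: 'k::field \<Rightarrow> 'd::ab_group_add \<Rightarrow> 'd) D dlD drD"
    and s: "s ` X \<subseteq> D"
  shows "\<exists>\<Psi>. dialg_hom dias_scale (dias_carrier X) dias_dl dias_dr scD D dlD drD \<Psi>
    \<and> (\<forall>x\<in>X. \<Psi> (dias_gen x) = s x)"
proof -
  define s' where "s' x = (if x \<in> X then s x else 0)" for x
  have "0 \<in> D" using D by (simp add: assoc_dialg_def dialg_def subspc_def)
  then interpret dialg_eval scD D dlD drD s'
    using D s by unfold_locales (auto simp: s'_def)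
  have "\<forall>x\<in>X. dias_eval (dias_gen x) = s x"
    by (simp add: dias_gen_eq_basis dias_eval_basis s'_def)
  with dias_eval_hom show ?thesis by blast
qed

lemma DiSJ_subdialg:
  "subdialg dias_scale (dias_carrier X) (plus_dl dias_scale dias_dl dias_dr)
     (plus_dr dias_scale dias_dl dias_dr) (DiSJ X)"
  unfolding DiSJ_def
  by (rule gen_subdialg_subdialg[OF subdialg_plus_carrier[OF dialg_dias_carrier]])
    (auto simp: dias_gen_eq_basis marked_word_def intro!: dias_basis_in_carrier)

lemma DiSJ_in_HomDiSJ:
  "HomDiSJ_via TYPE(('x,'k::field) dias) dias_scale (DiSJ X :: ('x,'k) dias set)
     (plus_dl dias_scale dias_dl dias_dr) (plus_dr dias_scale dias_dl dias_dr)"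
  by (rule special_in_HomDiSJ[OF assoc_dialg_dias_carrier DiSJ_subdialg])

lemma DiSJ_hom_into_special:
  assumes \<Psi>: "dialg_hom dias_scale (dias_carrier X) dias_dl dias_dr scD D dlD drD \<Psi>"
    and S: "subdialg scD D (plus_dl scD dlD drD) (plus_dr scD dlD drD) S"
    and gen: "\<forall>x\<in>X. \<Psi> (dias_gen x) \<in> S"
  shows "dialg_hom dias_scale (DiSJ X) (plus_dl dias_scale dias_dl dias_dr)
    (plus_dr dias_scale dias_dl dias_dr) scD S (plus_dl scD dlD drD) (plus_dr scD dlD drD) \<Psi>"
proof -
  have carrier: "subdialg dias_scale (dias_carrier X) (plus_dl dias_scale dias_dl dias_dr)
      (plus_dr dias_scale dias_dl dias_dr) (dias_carrier X)"
    by (rule subdialg_plus_carrier[OF dialg_dias_carrier])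
  have \<Psi>_plus: "dialg_hom dias_scale (dias_carrier X) (plus_dl dias_scale dias_dl dias_dr)
      (plus_dr dias_scale dias_dl dias_dr) scD D (plus_dl scD dlD drD) (plus_dr scD dlD drD) \<Psi>"
    by (rule dialg_hom_plus[OF dialg_dias_carrier \<Psi>])
  have gens: "dias_gen ` X \<subseteq> dias_carrier X \<inter> \<Psi> -` S"
    using gen by (auto simp: dias_gen_eq_basis marked_word_def intro!: dias_basis_in_carrier)
  have "DiSJ X \<subseteq> dias_carrier X \<inter> \<Psi> -` S"
    unfolding DiSJ_def
    by (rule gen_subdialg_least[OF dialg_hom_vimage_subdialg[OF \<Psi>_plus carrier S] gens])
  then show ?thesis
    by (intro dialg_hom_restrict[OF \<Psi>_plus]) auto
qed

lemma DiSJ_universal: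
  fixes sc :: "'k::field \<Rightarrow> 'b::ab_group_add \<Rightarrow> 'b" and \<phi> :: "'x \<Rightarrow> 'b"
  assumes J: "HomDiSJ_via TYPE('d::ab_group_add) sc J dl dr" and \<phi>: "\<phi> ` X \<subseteq> J"
  shows "\<exists>h. dialg_hom dias_scale (DiSJ X) (plus_dl dias_scale dias_dl dias_dr)
      (plus_dr dias_scale dias_dl dias_dr) sc J dl dr h \<and> (\<forall>x\<in>X. h (dias_gen x) = \<phi> x)"
proof -
  obtain scD :: "'k \<Rightarrow> 'd \<Rightarrow> 'd" and D dlD drD S f
    where D: "assoc_dialg scD D dlD drD"
      and S: "subdialg scD D (plus_dl scD dlD drD) (plus_dr scD dlD drD) S"
      and f: "dialg_hom scD S (plus_dl scD dlD drD) (plus_dr scD dlD drD) sc J dl dr f"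
      and onto: "f ` S = J"
    using J unfolding HomDiSJ_via_def by blast
  have "\<forall>x\<in>X. \<exists>t. t \<in> S \<and> f t = \<phi> x"
    using \<phi> unfolding onto[symmetric] by (metis image_iff subsetD)
  from bchoice[OF this] obtain s where s: "\<forall>x\<in>X. s x \<in> S \<and> f (s x) = \<phi> x"
    by blast
  have "s ` X \<subseteq> D"
    using s S by (auto simp: subdialg_def)
  from dias_free[OF D this] obtain \<Psi>
    where \<Psi>: "dialg_hom dias_scale (dias_carrier X) dias_dl dias_dr scD D dlD drD \<Psi>"
      and gen: "\<forall>x\<in>X. \<Psi> (dias_gen x) = s x"
    by blast
  have "dialg_hom dias_scale (DiSJ X) (plus_dl dias_scale dias_dl dias_dr)
      (plus_dr dias_scale dias_dl dias_dr) sc J dl dr (f \<circ> \<Psi>)"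
    using s gen by (intro dialg_hom_comp[OF DiSJ_hom_into_special[OF \<Psi> S] f]
        subdialg_self[OF DiSJ_subdialg]) simp
  then show ?thesis
    using s gen by (intro exI[of _ "f \<circ> \<Psi>"]) simp
qed

theorem mainTheorem17:
  fixes X :: "'x set"
    and dummy :: "'k::field_char_0"
  shows "HomDiSJ_via TYPE(('x,'k) dias) (dias_scale :: 'k \<Rightarrow> _) (DiSJ X)
           (plus_dl dias_scale dias_dl dias_dr) (plus_dr dias_scale dias_dl dias_dr)
       \<and> (\<forall>(sc :: 'k \<Rightarrow> 'b::ab_group_add \<Rightarrow> 'b) J dl dr (\<phi> :: 'x \<Rightarrow> 'b).
            HomDiSJ_via TYPE('d::ab_group_add) sc J dl dr \<longrightarrow> \<phi> ` X \<subseteq> J \<longrightarrow>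
            (\<exists>h. dialg_hom dias_scale (DiSJ X)
                   (plus_dl dias_scale dias_dl dias_dr) (plus_dr dias_scale dias_dl dias_dr)
                   sc J dl dr h
                 \<and> (\<forall>x\<in>X. h (dias_gen x) = \<phi> x)))"
  by (simp add: DiSJ_in_HomDiSJ DiSJ_universal)

end
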